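(* Let $\mathcal T$ be a closed triangulated surface with $V(\mathcal T)\leq 11$ and let $(\mathcal G,\mathcal D,\{\mathcal D_1,\ldots,\mathcal D_n\})$ be a decomposition of $\mathcal T$. Then the boundary of $\mathcal G$ has exactly $1$ or $2$ connected components.
   Context: A triangulated surface is a finite simplicial complex whose underlying space is a connected compact surface; it is closed if the surface has empty boundary; $V(\cdot)$ is the number of vertices. The valence of a vertex is the number of triangles containing it. A decomposition of a closed triangulated surface $\mathcal T$ is a triple $(\mathcal G,\mathcal D,\{\mathcal D_1,\ldots,\mathcal D_n\})$, $n\geq0$, of sub-triangulations (subcomplexes which are triangulated surfaces) of $\mathcal T$ such that $\mathcal D,\mathcal D_1,\ldots,\mathcal D_n$ are triangulated discs, the interior of $\mathcal D$ contains a vertex of maximal valence in $\mathcal T$, $\mathcal G\cup\mathcal D\cup\mathcal D_1\cup\dots\cup\mathcal D_n=\mathcal T$, and any two of them intersect in a triangulated circle or not at all. *)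

theory Defs
  imports Main
begin

text \<open>A (pure 2-dimensional) finite simplicial complex is represented by its set of
  triangles (3-element vertex sets). Its simplices are all nonempty subsets of triangles.\<close>

definition verts :: "'a set set \<Rightarrow> 'a set" where
  "verts K = \<Union>K"

definition faces :: "'a set set \<Rightarrow> 'a set set" where
  "faces K = {s. s \<noteq> {} \<and> (\<exists>t\<in>K. s \<subseteq> t)}"

definition edges :: "'a set set \<Rightarrow> 'a set set" where
  "edges K = {e. card e = 2 \<and> (\<exists>t\<in>K. e \<subseteq> t)}"

definition tri_count :: "'a set set \<Rightarrow> 'a set \<Rightarrow> nat" where
  "tri_count K e = card {t\<in>K. e \<subseteq> t}"

definition graph_connected :: "'a set set \<Rightarrow> bool" where
  "graph_connected E = (\<forall>a\<in>\<Union>E. \<forall>b\<in>\<Union>E. (\<lambda>x y. {x, y} \<in> E)\<^sup>*\<^sup>* a b)"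

definition cx_connected :: "'a set set \<Rightarrow> bool" where
  "cx_connected K = graph_connected (edges K)"

definition link :: "'a set set \<Rightarrow> 'a \<Rightarrow> 'a set set" where
  "link K v = {t - {v} | t. t \<in> K \<and> v \<in> t}"

text \<open>Triangulated (compact, connected) surface, possibly with boundary: every edge lies
  in one or two triangles and every vertex link is connected (hence a path or a cycle).\<close>
definition is_surface :: "'a set set \<Rightarrow> bool" where
  "is_surface K \<longleftrightarrow> finite K \<and> K \<noteq> {} \<and> (\<forall>t\<in>K. card t = 3)
     \<and> (\<forall>e\<in>edges K. tri_count K e = 1 \<or> tri_count K e = 2)
     \<and> (\<forall>v\<in>verts K. graph_connected (link K v))
     \<and> cx_connected K"

definition closed_surface :: "'a set set \<Rightarrow> bool" where
  "closed_surface K \<longleftrightarrow> is_surface K \<and> (\<forall>e\<in>edges K. tri_count K e = 2)"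

definition bd_edges :: "'a set set \<Rightarrow> 'a set set" where
  "bd_edges K = {e\<in>edges K. tri_count K e = 1}"

definition bd_verts :: "'a set set \<Rightarrow> 'a set" where
  "bd_verts K = \<Union>(bd_edges K)"

definition bd_components :: "'a set set \<Rightarrow> 'a set set" where
  "bd_components K = bd_verts K // {(a, b). (\<lambda>x y. {x, y} \<in> bd_edges K)\<^sup>*\<^sup>* a b}"

definition euler :: "'a set set \<Rightarrow> int" where
  "euler K = int (card (verts K)) - int (card (edges K)) + int (card K)"

text \<open>Triangulated disc: a triangulated surface with nonempty connected boundary and
  Euler characteristic 1 (by the classification of compact surfaces, exactly the discs).\<close>
definition is_disc :: "'a set set \<Rightarrow> bool" where
  "is_disc K \<longleftrightarrow> is_surface K \<and> bd_edges K \<noteq> {} \<and> card (bd_components K) = 1 \<and> euler K = 1"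

text \<open>Triangulated circle, given as a set of simplices (vertices and edges).\<close>
definition is_circle_cx :: "'a set set \<Rightarrow> bool" where
  "is_circle_cx S \<longleftrightarrow> (let E = {s\<in>S. card s = 2} in
      finite S \<and> E \<noteq> {} \<and> S = faces E
      \<and> (\<forall>v\<in>\<Union>E. card {e\<in>E. v \<in> e} = 2)
      \<and> graph_connected E)"

definition meet_ok :: "'a set set \<Rightarrow> 'a set set \<Rightarrow> bool" where
  "meet_ok A B \<longleftrightarrow> faces A \<inter> faces B = {} \<or> is_circle_cx (faces A \<inter> faces B)"

definition valence :: "'a set set \<Rightarrow> 'a \<Rightarrow> nat" where
  "valence K v = card {t\<in>K. v \<in> t}"

definition decomposition :: "'a set set \<Rightarrow> 'a set set \<Rightarrow> 'a set set \<Rightarrow> 'a set set list \<Rightarrow> bool" where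
  "decomposition T G D Ds \<longleftrightarrow>
     is_surface G \<and> G \<subseteq> T \<and> is_disc D \<and> D \<subseteq> T
     \<and> (\<forall>X\<in>set Ds. is_disc X \<and> X \<subseteq> T)
     \<and> (\<exists>v\<in>verts D - bd_verts D. \<forall>w\<in>verts T. valence T w \<le> valence T v)
     \<and> G \<union> D \<union> \<Union>(set Ds) = T
     \<and> meet_ok G D
     \<and> (\<forall>X\<in>set Ds. meet_ok G X \<and> meet_ok D X)
     \<and> (\<forall>i<length Ds. \<forall>j<length Ds. i \<noteq> j \<longrightarrow> meet_ok (Ds ! i) (Ds ! j))"

end

theory Submission
  imports Defs
begin

text \<open>Every boundary component of G contains a whole circle in which G meets one of the discs,
  hence at least three vertices; and G has a boundary, since otherwise it would contain the star of
  the interior vertex v of D. As G meets D in a single circle, at most one boundary component meets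
  D. Three components would therefore give two disjoint triples of vertices outside D, hence
  outside the closed star of v, a vertex of maximal valence. With at most 11 vertices this forces
  valence at most 4 everywhere; but a closed surface all of whose valences are at most 4 is the
  tetrahedron, the triangular bipyramid or the octahedron, with at most 6 vertices.\<close>

definition neighbours :: "'a set set \<Rightarrow> 'a \<Rightarrow> 'a set" where
  "neighbours K u = {x. x \<noteq> u \<and> (\<exists>t\<in>K. u \<in> t \<and> x \<in> t)}"

lemma neighboursI: "t \<in> K \<Longrightarrow> u \<in> t \<Longrightarrow> x \<in> t \<Longrightarrow> x \<noteq> u \<Longrightarrow> x \<in> neighbours K u"
  unfolding neighbours_def by blast

lemma card_3_distinct: "card {x, y, z} = 3 \<Longrightarrow> x \<noteq> y \<and> x \<noteq> z \<and> y \<noteq> z"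
  by (cases "x = y"; cases "x = z"; cases "y = z") (auto simp: card_insert_if)

lemma card_3_split_at:
  assumes "card t = 3" "u \<in> t"
  obtains a b where "t = {u, a, b}" "a \<noteq> b" "a \<noteq> u" "b \<noteq> u"
proof -
  have "card (t - {u}) = 2" using assms by simp
  then obtain a b where "t - {u} = {a, b}" "a \<noteq> b" by (meson card_2_iff)
  then show thesis using that assms(2) by blast
qed

lemma card_2_split_at:
  assumes "card e = 2" "y \<in> e"
  obtains a where "e = {y, a}" "a \<noteq> y"
proof -
  have "card (e - {y}) = 1" using assms by simp
  then obtain a where "e - {y} = {a}" by (rule card_1_singletonE)
  then show thesis using that assms(2) by blast
qed

definition bd_rel :: "'a set set \<Rightarrow> 'a rel" where
  "bd_rel K = {(x, y). {x, y} \<in> bd_edges K}\<^sup>*"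

lemma bd_components_eq_quotient: "bd_components K = bd_verts K // bd_rel K"
  unfolding bd_components_def bd_rel_def rtrancl_def by simp

lemma equiv_bd_rel: "equiv UNIV (bd_rel K)"
proof -
  have "sym {(x, y). {x, y} \<in> bd_edges K}" by (auto intro: symI simp: insert_commute)
  then show ?thesis unfolding bd_rel_def
    by (intro equivI refl_rtrancl sym_rtrancl trans_rtrancl) auto
qed

lemma bd_component_in_quotient: "c \<in> bd_components K \<Longrightarrow> c \<in> UNIV // bd_rel K"
  unfolding bd_components_eq_quotient quotient_def by blast

lemma bd_component_subset:
  assumes "c \<in> bd_components K"
  shows "c \<subseteq> bd_verts K"
proof -
  obtain x where c: "c = bd_rel K `` {x}" and x: "x \<in> bd_verts K"
    using assms unfolding bd_components_eq_quotient by (rule quotientE)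
  show ?thesis
  proof
    fix y assume "y \<in> c"
    then have "(x, y) \<in> {(x, y). {x, y} \<in> bd_edges K}\<^sup>*" unfolding c bd_rel_def by simp
    then show "y \<in> bd_verts K"
      by (induction rule: rtrancl_induct) (use x in \<open>auto simp: bd_verts_def\<close>)
  qed
qed

lemma bd_verts_subset_verts: "bd_verts K \<subseteq> verts K"
  unfolding bd_verts_def bd_edges_def edges_def verts_def by blast

lemma finite_bd_components: "finite (bd_verts K) \<Longrightarrow> finite (bd_components K)"
  unfolding bd_components_eq_quotient quotient_def UNION_singleton_eq_range by (rule finite_imageI)

lemma faces_inter_card_2: "{s \<in> faces A \<inter> faces B. card s = 2} = edges A \<inter> edges B"
  unfolding faces_def edges_def by auto

lemma edges_subset_faces: "edges K \<subseteq> faces K"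
  unfolding faces_def edges_def by auto

lemma circle_faces_interD:
  assumes "is_circle_cx (faces A \<inter> faces B)"
  shows "finite (faces A \<inter> faces B)" "edges A \<inter> edges B \<noteq> {}"
    "faces A \<inter> faces B = faces (edges A \<inter> edges B)"
    "\<forall>v\<in>\<Union>(edges A \<inter> edges B). card {e \<in> edges A \<inter> edges B. v \<in> e} = 2"
    "graph_connected (edges A \<inter> edges B)"
  using assms unfolding is_circle_cx_def Let_def faces_inter_card_2 by blast+

lemma meet_ok_circle:
  assumes "meet_ok A B" "faces A \<inter> faces B \<noteq> {}"
  shows "is_circle_cx (faces A \<inter> faces B)"
  using assms unfolding meet_ok_def by blast

lemma meet_ok_card_le_2:
  assumes "meet_ok A B" "s \<in> faces A" "s \<in> faces B"
  shows "card s \<le> 2"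
proof -
  have "s \<in> faces (edges A \<inter> edges B)"
    using circle_faces_interD(3)[OF meet_ok_circle] assms by blast
  then obtain e where "e \<in> edges A" "s \<subseteq> e" unfolding faces_def by blast
  then have "card e = 2" "finite e" unfolding edges_def by (auto simp: card_ge_0_finite)
  then show ?thesis using card_mono \<open>s \<subseteq> e\<close> by fastforce
qed

lemma meet_ok_common_vertex:
  assumes "meet_ok A B" "y \<in> verts A" "y \<in> verts B"
  shows "y \<in> \<Union>(edges A \<inter> edges B)"
proof -
  have "{y} \<in> faces A \<inter> faces B" using assms(2,3) unfolding verts_def faces_def by blast
  then have "{y} \<in> faces (edges A \<inter> edges B)"
    using circle_faces_interD(3)[OF meet_ok_circle] assms(1) by blast
  then show ?thesis unfolding faces_def by blast
qed

lemma meet_ok_common_edges_connected: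
  assumes "meet_ok A B" "x \<in> \<Union>(edges A \<inter> edges B)" "y \<in> \<Union>(edges A \<inter> edges B)"
  shows "(\<lambda>p q. {p, q} \<in> edges A \<inter> edges B)\<^sup>*\<^sup>* x y"
proof -
  have "faces A \<inter> faces B \<noteq> {}" using assms(2) edges_subset_faces by blast
  then have "graph_connected (edges A \<inter> edges B)"
    using circle_faces_interD(5)[OF meet_ok_circle] assms(1) by blast
  then show ?thesis using assms(2,3) unfolding graph_connected_def by blast
qed

lemma meet_ok_card_common_verts_ge_3:
  assumes "meet_ok A B" "edges A \<inter> edges B \<noteq> {}"
  shows "3 \<le> card (\<Union>(edges A \<inter> edges B))"
proof -
  define E where "E = edges A \<inter> edges B"
  have "faces A \<inter> faces B \<noteq> {}" using assms(2) edges_subset_faces by blast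
  note circle = circle_faces_interD[OF meet_ok_circle[OF assms(1) this], folded E_def]
  have card_E: "card e = 2" if "e \<in> E" for e using that unfolding E_def edges_def by blast
  have "E \<subseteq> faces A \<inter> faces B" using edges_subset_faces unfolding E_def by blast
  then have "finite E" using circle(1) by (rule finite_subset)
  then have "finite (\<Union>E)" using card_E by (simp add: card_ge_0_finite)
  obtain e0 where "e0 \<in> E" using circle(2) by blast
  moreover have "e0 \<noteq> {}" using card_E[OF \<open>e0 \<in> E\<close>] by auto
  ultimately obtain y where "y \<in> \<Union>E" by blast
  \<comment> \<open>Each vertex of a triangulated circle lies on two edges, whose other ends differ.\<close>
  then have "card {e\<in>E. y \<in> e} = 2" using circle(4) by blast
  then obtain e1 e2 where e12: "{e\<in>E. y \<in> e} = {e1, e2}" "e1 \<noteq> e2" by (meson card_2_iff)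
  then have e1: "e1 \<in> E" "y \<in> e1" and e2: "e2 \<in> E" "y \<in> e2" by auto
  obtain a where a: "e1 = {y, a}" "a \<noteq> y" by (rule card_2_split_at[OF card_E[OF e1(1)] e1(2)])
  obtain b where b: "e2 = {y, b}" "b \<noteq> y" by (rule card_2_split_at[OF card_E[OF e2(1)] e2(2)])
  have "a \<noteq> b" using e12(2) a b by blast
  then have "card {y, a, b} = 3" using a b by simp
  moreover have "card {y, a, b} \<le> card (\<Union>E)"
    using e1 e2 a b by (intro card_mono[OF \<open>finite (\<Union>E)\<close>]) blast
  ultimately show ?thesis unfolding E_def by simp
qed

section \<open>Closed triangulated surfaces\<close>

locale closed_triangulation =
  fixes T :: "'a set set"
  assumes closed: "closed_surface T"
begin

lemma finite_triangles: "finite T"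
  and triangles_nonempty: "T \<noteq> {}"
  and card_triangle: "t \<in> T \<Longrightarrow> card t = 3"
  and tri_count_edge: "e \<in> edges T \<Longrightarrow> tri_count T e = 2"
  and link_connected: "v \<in> verts T \<Longrightarrow> graph_connected (link T v)"
  and edges_connected: "graph_connected (edges T)"
  using closed unfolding closed_surface_def is_surface_def cx_connected_def by auto

lemma triangle_distinct: "{x, y, z} \<in> T \<Longrightarrow> x \<noteq> y \<and> x \<noteq> z \<and> y \<noteq> z"
  by (rule card_3_distinct[OF card_triangle])

lemma finite_verts: "finite (verts T)"
  unfolding verts_def
proof (rule finite_Union[OF finite_triangles])
  show "finite t" if "t \<in> T" for t
    using card_triangle[OF that] by (simp add: card_ge_0_finite)
qed

lemma finite_neighbours: "finite (neighbours T u)"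
  by (rule finite_subset[OF _ finite_verts]) (auto simp: neighbours_def verts_def)

lemma edge_triangles:
  assumes "{u, a, b} \<in> T"
  shows "card {t\<in>T. {u, a} \<subseteq> t} = 2"
proof -
  have "{u, a} \<in> edges T"
    using assms triangle_distinct[OF assms] unfolding edges_def by auto
  then show ?thesis using tri_count_edge unfolding tri_count_def by blast
qed

lemma triangle_on_edge_cases:
  assumes "{u, a, b} \<in> T" "{u, a, c} \<in> T" "b \<noteq> c" "{u, a, y} \<in> T"
  shows "y = b \<or> y = c"
proof -
  obtain p q where pq: "{t\<in>T. {u, a} \<subseteq> t} = {p, q}"
    using edge_triangles[OF assms(1)] by (meson card_2_iff)
  have "b \<notin> {u, a, c}" using assms(3) triangle_distinct[OF assms(1)] by blast
  then have "{u, a, b} \<noteq> {u, a, c}" by blast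
  moreover have "{u, a, b} \<in> {p, q}" "{u, a, c} \<in> {p, q}" "{u, a, y} \<in> {p, q}"
    using assms pq[symmetric] by auto
  ultimately have "{u, a, y} = {u, a, b} \<or> {u, a, y} = {u, a, c}" by auto
  then have "y \<in> {u, a, b} \<or> y \<in> {u, a, c}" by (metis insertCI)
  then show ?thesis using triangle_distinct[OF assms(4)] by blast
qed

lemma other_triangle_on_edge:
  assumes "{u, a, b} \<in> T"
  obtains c where "{u, a, c} \<in> T" "c \<noteq> b"
proof -
  obtain p q where pq: "{t\<in>T. {u, a} \<subseteq> t} = {p, q}" "p \<noteq> q"
    using edge_triangles[OF assms] by (meson card_2_iff)
  obtain t where "t \<in> {p, q}" "t \<noteq> {u, a, b}" using pq(2) by blast
  then have t: "t \<in> {t\<in>T. {u, a} \<subseteq> t}" "t \<noteq> {u, a, b}" using pq(1) by simp_all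
  have "u \<noteq> a" using triangle_distinct[OF assms] by blast
  then have "card (t - {u, a}) = 1"
    using t(1) card_triangle by (simp add: card_Diff_subset)
  then obtain c where c: "t - {u, a} = {c}" by (rule card_1_singletonE)
  then have "t = {u, a, c}" using t(1) by blast
  moreover have "c \<noteq> b" using t(2) c \<open>t = {u, a, c}\<close> by blast
  ultimately show thesis using that t(1) by blast
qed

lemma triangle_neighbours:
  "{w, x, y} \<in> T \<Longrightarrow> x \<in> neighbours T w \<and> y \<in> neighbours T w"
  using triangle_distinct[of w x y] by (auto intro: neighboursI)

lemma valence_eq_card_neighbours: "valence T u = card (neighbours T u)"
proof -
  define A where "A = {t\<in>T. u \<in> t}"
  define N where "N = neighbours T u"
  have ft: "finite t" if "t \<in> T" for t
    using card_triangle[OF that] by (simp add: card_ge_0_finite)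
  \<comment> \<open>Double counting of the incidences between triangles at u and their vertices other than u.\<close>
  define P where "P = Sigma A (\<lambda>t. t - {u})"
  define Q where "Q = Sigma N (\<lambda>x. {t\<in>T. {u, x} \<subseteq> t})"
  have "card P = (\<Sum>t\<in>A. card (t - {u}))"
    unfolding P_def A_def using finite_triangles ft by simp
  also have "\<dots> = (\<Sum>t\<in>A. 2)"
    by (rule sum.cong) (auto simp: A_def card_triangle ft)
  finally have card_P: "card P = 2 * card A" by simp
  have "card Q = (\<Sum>x\<in>N. card {t\<in>T. {u, x} \<subseteq> t})"
    unfolding Q_def N_def using finite_neighbours finite_triangles by simp
  also have "\<dots> = (\<Sum>x\<in>N. 2)"
  proof (rule sum.cong)
    fix x assume "x \<in> N"
    then have "{u, x} \<in> edges T" unfolding N_def neighbours_def edges_def by auto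
    then show "card {t\<in>T. {u, x} \<subseteq> t} = 2" using tri_count_edge unfolding tri_count_def by blast
  qed simp
  finally have card_Q: "card Q = 2 * card N" by simp
  have "Q = (\<lambda>(t, x). (x, t)) ` P" unfolding P_def Q_def A_def N_def neighbours_def by auto
  moreover have "inj_on (\<lambda>(t, x). (x, t)) P" unfolding inj_on_def by auto
  ultimately have "card Q = card P" by (simp add: card_image)
  then show ?thesis using card_P card_Q unfolding valence_def A_def N_def by simp
qed

lemma card_neighbours_ge_3:
  assumes "u \<in> verts T"
  shows "3 \<le> card (neighbours T u)"
proof -
  obtain t where "t \<in> T" "u \<in> t" using assms unfolding verts_def by blast
  then obtain a b where uab: "{u, a, b} \<in> T" by (metis card_3_split_at card_triangle)
  obtain c where uac: "{u, a, c} \<in> T" and "c \<noteq> b" by (rule other_triangle_on_edge[OF uab])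
  have "{a, b, c} \<subseteq> neighbours T u"
    using triangle_neighbours[OF uab] triangle_neighbours[OF uac] by blast
  moreover have "card {a, b, c} = 3"
    using \<open>c \<noteq> b\<close> triangle_distinct[OF uab] triangle_distinct[OF uac] by auto
  ultimately show ?thesis by (metis card_mono finite_neighbours)
qed

text \<open>Since the link of u is connected, a nonempty set of vertices that contains, with each member c,
  both neighbours of c in the link is the whole link.\<close>
lemma neighbours_eq_if_link_closed:
  assumes c0: "c0 \<in> C"
    and closed_C: "\<forall>c\<in>C. \<exists>p\<in>C. \<exists>q\<in>C. p \<noteq> q \<and> {u, c, p} \<in> T \<and> {u, c, q} \<in> T"
  shows "neighbours T u = C"
proof
  show "C \<subseteq> neighbours T u"
    using closed_C triangle_neighbours by blast
next
  obtain p where p: "{u, c0, p} \<in> T" using closed_C c0 by blast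
  have "u \<in> verts T" unfolding verts_def using p by blast
  then have connected: "graph_connected (link T u)" by (rule link_connected)
  have "{u, c0, p} - {u} \<in> link T u" unfolding link_def using p by blast
  then have c0_link: "c0 \<in> \<Union>(link T u)" using triangle_distinct[OF p] by blast
  show "neighbours T u \<subseteq> C"
  proof
    fix x assume "x \<in> neighbours T u"
    then obtain t where t: "t \<in> T" "u \<in> t" "x \<in> t" "x \<noteq> u" unfolding neighbours_def by blast
    have "t - {u} \<in> link T u" unfolding link_def using t by blast
    then have "x \<in> \<Union>(link T u)" using t by blast
    then have "(\<lambda>x y. {x, y} \<in> link T u)\<^sup>*\<^sup>* c0 x"
      using connected c0_link unfolding graph_connected_def by blast
    then show "x \<in> C"
    proof (induction rule: rtranclp_induct)
      case base
      show ?case using c0 .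
    next
      case (step y z)
      obtain t where t: "{y, z} = t - {u}" "t \<in> T" "u \<in> t" using step(2) unfolding link_def by blast
      then have "{u, y, z} \<in> T" by (metis insert_Diff insert_commute)
      moreover obtain p q where "p \<in> C" "q \<in> C" "p \<noteq> q" "{u, y, p} \<in> T" "{u, y, q} \<in> T"
        using closed_C step(3) by blast
      ultimately show ?case using triangle_on_edge_cases by blast
    qed
  qed
qed

lemma verts_subset_if_neighbours_closed:
  assumes "w \<in> S" "w \<in> verts T" and closed_S: "\<forall>s\<in>S. neighbours T s \<subseteq> S"
  shows "verts T \<subseteq> S"
proof -
  have vertex_in_edge: "x \<in> \<Union>(edges T)" if x: "x \<in> verts T" for x
  proof -
    obtain t where "t \<in> T" "x \<in> t" using x unfolding verts_def by blast
    then obtain a b where xab: "{x, a, b} \<in> T" by (metis card_3_split_at card_triangle)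
    then have "card {x, a} = 2" using triangle_distinct by simp
    then have "{x, a} \<in> edges T" unfolding edges_def using xab by blast
    then show ?thesis by blast
  qed
  show ?thesis
  proof
    fix x assume "x \<in> verts T"
    then have "(\<lambda>p q. {p, q} \<in> edges T)\<^sup>*\<^sup>* w x"
      using edges_connected vertex_in_edge \<open>w \<in> verts T\<close> unfolding graph_connected_def by blast
    then show "x \<in> S"
    proof (induction rule: rtranclp_induct)
      case base
      show ?case using \<open>w \<in> S\<close> .
    next
      case (step p q)
      then obtain t where "card {p, q} = 2" "t \<in> T" "{p, q} \<subseteq> t" unfolding edges_def by blast
      moreover have "q \<noteq> p" using \<open>card {p, q} = 2\<close> by (cases "p = q") simp_all
      ultimately have "q \<in> neighbours T p" by (simp add: neighboursI)
      then show ?case using closed_S step(3) by blast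
    qed
  qed
qed

subsection \<open>Closed surfaces with all valences at most 4\<close>

lemma neighbours_3cycle:
  assumes uxy: "{u, x, y} \<in> T" and uyz: "{u, y, z} \<in> T" and uzx: "{u, z, x} \<in> T"
  shows "neighbours T u = {x, y, z}"
proof (rule neighbours_eq_if_link_closed[of x])
  have "x \<noteq> y" "y \<noteq> z" "z \<noteq> x"
    using triangle_distinct[OF uxy] triangle_distinct[OF uyz] triangle_distinct[OF uzx] by blast+
  moreover have "{u, y, x} \<in> T" "{u, z, y} \<in> T" "{u, x, z} \<in> T"
    using assms by (simp_all add: insert_commute)
  ultimately show "\<forall>c\<in>{x, y, z}. \<exists>p\<in>{x, y, z}. \<exists>q\<in>{x, y, z}.
      p \<noteq> q \<and> {u, c, p} \<in> T \<and> {u, c, q} \<in> T"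
    using assms by blast
qed simp

lemma neighbours_4cycle:
  assumes uxy: "{u, x, y} \<in> T" and uyz: "{u, y, z} \<in> T" and uzr: "{u, z, r} \<in> T"
    and urx: "{u, r, x} \<in> T" and "x \<noteq> z" "y \<noteq> r"
  shows "neighbours T u = {x, y, z, r}"
proof (rule neighbours_eq_if_link_closed[of x])
  have "x \<noteq> y" "y \<noteq> z" "z \<noteq> r" "r \<noteq> x"
    using triangle_distinct[OF uxy] triangle_distinct[OF uyz] triangle_distinct[OF uzr]
      triangle_distinct[OF urx] by blast+
  moreover have "{u, y, x} \<in> T" "{u, z, y} \<in> T" "{u, r, z} \<in> T" "{u, x, r} \<in> T"
    using assms by (simp_all add: insert_commute)
  ultimately show "\<forall>c\<in>{x, y, z, r}. \<exists>p\<in>{x, y, z, r}. \<exists>q\<in>{x, y, z, r}.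
      p \<noteq> q \<and> {u, c, p} \<in> T \<and> {u, c, q} \<in> T"
    using assms by blast
qed simp

lemma link_3cycle_or_4cycle:
  assumes w: "w \<in> verts T" and le4: "card (neighbours T w) \<le> 4"
  obtains a b c where "{w, a, b} \<in> T" "{w, b, c} \<in> T" "{w, c, a} \<in> T"
  | a b c d where "{w, a, b} \<in> T" "{w, b, c} \<in> T" "{w, c, d} \<in> T" "{w, d, a} \<in> T"
      "a \<noteq> c" "b \<noteq> d"
proof -
  obtain t where "t \<in> T" "w \<in> t" using w unfolding verts_def by blast
  then obtain a b where wab: "{w, a, b} \<in> T" by (metis card_3_split_at card_triangle)
  have "{w, b, a} \<in> T" using wab by (simp add: insert_commute)
  then obtain c where wbc: "{w, b, c} \<in> T" and "c \<noteq> a" by (rule other_triangle_on_edge)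
  show thesis
  proof (cases "{w, c, a} \<in> T")
    case True
    then show thesis by (rule that(1)[OF wab wbc])
  next
    case wca: False
    have "{w, c, b} \<in> T" using wbc by (simp add: insert_commute)
    then obtain d where wcd: "{w, c, d} \<in> T" and "d \<noteq> b" by (rule other_triangle_on_edge)
    have "d \<noteq> a" using wca wcd by (cases "d = a") simp_all
    show thesis
    proof (cases "{w, d, a} \<in> T")
      case True
      then show thesis by (rule that(2)[OF wab wbc wcd _ \<open>c \<noteq> a\<close>[symmetric] \<open>d \<noteq> b\<close>[symmetric]])
    next
      case wda: False
      \<comment> \<open>Then the triangles at w around a, b, c, d do not close up, giving a fifth neighbour.\<close>
      obtain e where wae: "{w, a, e} \<in> T" and "e \<noteq> b" by (rule other_triangle_on_edge[OF wab])
      have "e \<noteq> c" using wca wae by (cases "e = c") (simp_all add: insert_commute)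
      have "e \<noteq> d" using wda wae by (cases "e = d") (simp_all add: insert_commute)
      have "{a, b, c, d, e} \<subseteq> neighbours T w"
        using triangle_neighbours[OF wab] triangle_neighbours[OF wcd] triangle_neighbours[OF wae]
        by simp
      moreover have "card {a, b, c, d, e} = 5"
        using triangle_distinct[OF wab] triangle_distinct[OF wbc] triangle_distinct[OF wcd]
          triangle_distinct[OF wae] \<open>c \<noteq> a\<close> \<open>d \<noteq> b\<close> \<open>d \<noteq> a\<close> \<open>e \<noteq> b\<close> \<open>e \<noteq> c\<close> \<open>e \<noteq> d\<close>
        by simp
      ultimately have "5 \<le> card (neighbours T w)" by (metis card_mono finite_neighbours)
      then show thesis using le4 by simp
    qed
  qed
qed

lemma valence_3_if_link_triangle:
  assumes "{u, a, b} \<in> T" "{u, a, c} \<in> T" "b \<noteq> c" "{a, b, c} \<in> T"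
  shows "card (neighbours T a) = 3"
proof -
  have "{a, u, b} \<in> T" "{a, b, c} \<in> T" "{a, c, u} \<in> T"
    using assms by (simp_all add: insert_commute)
  then have "neighbours T a = {u, b, c}" by (rule neighbours_3cycle)
  then show ?thesis
    using assms(3) triangle_distinct[OF assms(1)] triangle_distinct[OF assms(2)] by simp
qed

lemma valence_le_4_opposite_vertex:
  assumes le4: "card (neighbours T a) \<le> 4"
    and uab: "{u, a, b} \<in> T" and uac: "{u, a, c} \<in> T" and "b \<noteq> c" and abc: "{a, b, c} \<notin> T"
  obtains z where "z \<notin> {u, a, b, c}" "{a, b, z} \<in> T" "{a, c, z} \<in> T"
    "neighbours T a = {u, b, c, z}"
proof -
  have "{a, b, u} \<in> T" "{a, c, u} \<in> T" using uab uac by (simp_all add: insert_commute)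
  obtain z where abz: "{a, b, z} \<in> T" and "z \<noteq> u"
    using other_triangle_on_edge[OF \<open>{a, b, u} \<in> T\<close>] by blast
  obtain z' where acz': "{a, c, z'} \<in> T" and "z' \<noteq> u"
    using other_triangle_on_edge[OF \<open>{a, c, u} \<in> T\<close>] by blast
  have "z \<noteq> c" using abz abc by auto
  have "z' \<noteq> b" using acz' abc by (auto simp: insert_commute)
  have sub: "{u, b, c, z} \<subseteq> neighbours T a"
    using triangle_neighbours[OF \<open>{a, b, u} \<in> T\<close>] triangle_neighbours[OF \<open>{a, c, u} \<in> T\<close>]
      triangle_neighbours[OF abz] by blast
  have "card {u, b, c, z} = 4"
    using triangle_distinct[OF uab] triangle_distinct[OF uac] triangle_distinct[OF abz]
      \<open>b \<noteq> c\<close> \<open>z \<noteq> c\<close> \<open>z \<noteq> u\<close> by simp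
  then have nbrs: "neighbours T a = {u, b, c, z}"
    using le4 by (metis card_subset_eq finite_neighbours sub antisym card_mono)
  have "z' \<in> neighbours T a" using triangle_neighbours[OF acz'] by blast
  then have "z' = z" using nbrs \<open>z' \<noteq> u\<close> \<open>z' \<noteq> b\<close> triangle_distinct[OF acz'] by auto
  moreover have "z \<notin> {u, a, b, c}"
    using triangle_distinct[OF abz] \<open>z \<noteq> c\<close> \<open>z \<noteq> u\<close> by blast
  ultimately show thesis using that abz acz' nbrs by blast
qed

text \<open>Walking around the link of w: the vertex opposite to w across the edge ab is also opposite to w
  across the next edge bc.\<close>
lemma valence_le_4_shared_opposite_vertex:
  assumes le4: "card (neighbours T b) \<le> 4"
    and wba: "{w, b, a} \<in> T" and wbc: "{w, b, c} \<in> T" and "a \<noteq> c" and abc: "{a, b, c} \<notin> T"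
    and abz: "{a, b, z} \<in> T" and "z \<noteq> w"
  shows "{b, c, z} \<in> T" "neighbours T b = {w, a, c, z}"
proof -
  have "{b, a, c} \<notin> T" using abc by (simp add: insert_commute)
  then obtain z' where z': "z' \<notin> {w, b, a, c}" "{b, a, z'} \<in> T" "{b, c, z'} \<in> T"
    "neighbours T b = {w, a, c, z'}"
    using valence_le_4_opposite_vertex[OF le4 wba wbc \<open>a \<noteq> c\<close>] by blast
  have "{a, b, w} \<in> T" "{a, b, z'} \<in> T" using wba z'(2) by (simp_all add: insert_commute)
  then have "z' = w \<or> z' = z" using triangle_on_edge_cases abz \<open>z \<noteq> w\<close> by blast
  then have "z' = z" using z'(1) by blast
  then show "{b, c, z} \<in> T" "neighbours T b = {w, a, c, z}" using z' by simp_all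
qed

lemma card_verts_le_5_if_link_3cycle:
  assumes le4: "\<forall>u\<in>verts T. card (neighbours T u) \<le> 4"
    and wab: "{w, a, b} \<in> T" and wbc: "{w, b, c} \<in> T" and wca: "{w, c, a} \<in> T"
  shows "card (verts T) \<le> 5"
proof -
  have w: "w \<in> verts T" and "a \<in> verts T" "b \<in> verts T" "c \<in> verts T"
    using wab wbc unfolding verts_def by blast+
  then have le4_abc: "card (neighbours T a) \<le> 4" "card (neighbours T b) \<le> 4"
    "card (neighbours T c) \<le> 4"
    using le4 by blast+
  have nw: "neighbours T w = {a, b, c}" by (rule neighbours_3cycle[OF wab wbc wca])
  show ?thesis
  proof (cases "{a, b, c} \<in> T")
    case True
    \<comment> \<open>T is the boundary of a tetrahedron\<close>
    have "neighbours T a = {w, b, c}" "neighbours T b = {w, c, a}" "neighbours T c = {w, a, b}"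
      by (rule neighbours_3cycle; use wab wbc wca True in \<open>simp add: insert_commute\<close>)+
    then have "verts T \<subseteq> {w, a, b, c}"
      using nw by (intro verts_subset_if_neighbours_closed[OF _ w]) auto
    then have "card (verts T) \<le> card {w, a, b, c}" by (intro card_mono) simp_all
    then show ?thesis using card_length[of "[w, a, b, c]"] by simp
  next
    case False
    \<comment> \<open>T is the boundary of a triangular bipyramid with apexes w and z\<close>
    have wac: "{w, a, c} \<in> T" using wca by (simp add: insert_commute)
    have "b \<noteq> c" "a \<noteq> c" "a \<noteq> b"
      using triangle_distinct[OF wbc] triangle_distinct[OF wca] triangle_distinct[OF wab] by blast+
    obtain z where z: "z \<notin> {w, a, b, c}" "{a, b, z} \<in> T" "{a, c, z} \<in> T"
      and na: "neighbours T a = {w, b, c, z}"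
      by (rule valence_le_4_opposite_vertex[OF le4_abc(1) wab wac \<open>b \<noteq> c\<close> False])
    have "{w, b, a} \<in> T" using wab by (simp add: insert_commute)
    from valence_le_4_shared_opposite_vertex[OF le4_abc(2) this wbc \<open>a \<noteq> c\<close> False z(2)]
    have bcz: "{b, c, z} \<in> T" and nb: "neighbours T b = {w, a, c, z}" using z(1) by auto
    have "{w, c, b} \<in> T" "{a, c, b} \<notin> T" using wbc False by (simp_all add: insert_commute)
    from valence_le_4_shared_opposite_vertex(2)[OF le4_abc(3) wca this(1) \<open>a \<noteq> b\<close> this(2) z(3)]
    have nc: "neighbours T c = {w, a, b, z}" using z(1) by auto
    have nz: "neighbours T z = {a, b, c}"
      by (rule neighbours_3cycle) (use z bcz in \<open>simp_all add: insert_commute\<close>)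
    have "verts T \<subseteq> {w, a, b, c, z}"
      using nw na nb nc nz by (intro verts_subset_if_neighbours_closed[OF _ w]) auto
    then have "card (verts T) \<le> card {w, a, b, c, z}" by (intro card_mono) simp_all
    then show ?thesis using card_length[of "[w, a, b, c, z]"] by simp
  qed
qed

lemma card_verts_le_6_if_link_4cycle:
  assumes le4: "\<forall>u\<in>verts T. card (neighbours T u) \<le> 4"
    and ne3: "\<forall>u\<in>verts T. card (neighbours T u) \<noteq> 3"
    and wab: "{w, a, b} \<in> T" and wbc: "{w, b, c} \<in> T" and wcd: "{w, c, d} \<in> T"
    and wda: "{w, d, a} \<in> T" and "a \<noteq> c" "b \<noteq> d"
  shows "card (verts T) \<le> 6"
proof -
  \<comment> \<open>T is the boundary of an octahedron with opposite vertices w and z\<close>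
  have w: "w \<in> verts T" and "a \<in> verts T" "b \<in> verts T" "c \<in> verts T" "d \<in> verts T"
    using wab wcd unfolding verts_def by blast+
  then have le4_abcd: "card (neighbours T a) \<le> 4" "card (neighbours T b) \<le> 4"
      "card (neighbours T c) \<le> 4" "card (neighbours T d) \<le> 4"
    and ne3_abcd: "card (neighbours T a) \<noteq> 3" "card (neighbours T b) \<noteq> 3"
      "card (neighbours T c) \<noteq> 3" "card (neighbours T d) \<noteq> 3"
    using le4 ne3 by blast+
  have wad: "{w, a, d} \<in> T" and wba: "{w, b, a} \<in> T" and wcb: "{w, c, b} \<in> T"
    and wdc: "{w, d, c} \<in> T"
    using wab wbc wcd wda by (simp_all add: insert_commute)
  have abd: "{a, b, d} \<notin> T" and abc: "{a, b, c} \<notin> T" and bcd: "{b, c, d} \<notin> T"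
    and cda: "{c, d, a} \<notin> T"
    using valence_3_if_link_triangle[OF wab wad \<open>b \<noteq> d\<close>]
      valence_3_if_link_triangle[OF wba wbc \<open>a \<noteq> c\<close>]
      valence_3_if_link_triangle[OF wcb wcd \<open>b \<noteq> d\<close>]
      valence_3_if_link_triangle[OF wdc wda \<open>a \<noteq> c\<close>[symmetric]]
      ne3_abcd by (auto simp: insert_commute)
  have nw: "neighbours T w = {a, b, c, d}"
    by (rule neighbours_4cycle[OF wab wbc wcd wda \<open>a \<noteq> c\<close> \<open>b \<noteq> d\<close>])
  obtain z where z: "z \<notin> {w, a, b, d}" "{a, b, z} \<in> T" "{a, d, z} \<in> T"
    and na: "neighbours T a = {w, b, d, z}"
    by (rule valence_le_4_opposite_vertex[OF le4_abcd(1) wab wad \<open>b \<noteq> d\<close> abd])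
  from valence_le_4_shared_opposite_vertex[OF le4_abcd(2) wba wbc \<open>a \<noteq> c\<close> abc z(2)]
  have bcz: "{b, c, z} \<in> T" and nb: "neighbours T b = {w, a, c, z}" using z(1) by auto
  from valence_le_4_shared_opposite_vertex[OF le4_abcd(3) wcb wcd \<open>b \<noteq> d\<close> bcd bcz]
  have cdz: "{c, d, z} \<in> T" and nc: "neighbours T c = {w, b, d, z}" using z(1) by auto
  from valence_le_4_shared_opposite_vertex(2)[OF le4_abcd(4) wdc wda \<open>a \<noteq> c\<close>[symmetric] cda cdz]
  have nd: "neighbours T d = {w, c, a, z}" using z(1) by auto
  have nz: "neighbours T z = {a, b, c, d}"
    by (rule neighbours_4cycle) (use z bcz cdz \<open>a \<noteq> c\<close> \<open>b \<noteq> d\<close> in \<open>simp_all add: insert_commute\<close>)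
  have "verts T \<subseteq> {w, a, b, c, d, z}"
    using nw na nb nc nd nz by (intro verts_subset_if_neighbours_closed[OF _ w]) auto
  then have "card (verts T) \<le> card {w, a, b, c, d, z}" by (intro card_mono) simp_all
  then show ?thesis using card_length[of "[w, a, b, c, d, z]"] by simp
qed

lemma card_verts_le_6_if_valence_le_4:
  assumes le4: "\<forall>u\<in>verts T. card (neighbours T u) \<le> 4"
  shows "card (verts T) \<le> 6"
proof -
  have from_vertex: "card (verts T) \<le> 6"
    if w: "w \<in> verts T"
      and w_3: "card (neighbours T w) = 3 \<or> (\<forall>u\<in>verts T. card (neighbours T u) \<noteq> 3)" for w
  proof (rule link_3cycle_or_4cycle[OF w])
    show "card (neighbours T w) \<le> 4" using le4 w by blast
  next
    fix a b c
    assume "{w, a, b} \<in> T" "{w, b, c} \<in> T" "{w, c, a} \<in> T"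
    then have "card (verts T) \<le> 5" by (rule card_verts_le_5_if_link_3cycle[OF le4])
    then show ?thesis by simp
  next
    fix a b c d
    assume cycle: "{w, a, b} \<in> T" "{w, b, c} \<in> T" "{w, c, d} \<in> T" "{w, d, a} \<in> T"
      "a \<noteq> c" "b \<noteq> d"
    have "neighbours T w = {a, b, c, d}" by (rule neighbours_4cycle[OF cycle])
    moreover have "a \<noteq> d" using triangle_distinct[OF cycle(4)] by blast
    ultimately have "card (neighbours T w) = 4"
      using triangle_distinct[OF cycle(1)] triangle_distinct[OF cycle(2)]
        triangle_distinct[OF cycle(3)] cycle(5,6) by simp
    then show ?thesis using card_verts_le_6_if_link_4cycle[OF le4 _ cycle] w_3 by simp
  qed
  show ?thesis
  proof (cases "\<exists>u\<in>verts T. card (neighbours T u) = 3")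
    case True
    then show ?thesis using from_vertex by blast
  next
    case False
    obtain t where t: "t \<in> T" using triangles_nonempty by blast
    then have "t \<noteq> {}" using card_triangle by fastforce
    then obtain w where "w \<in> t" by blast
    then have "w \<in> verts T" using t unfolding verts_def by blast
    then show ?thesis using from_vertex False by blast
  qed
qed

subsection \<open>Subcomplexes of a closed surface\<close>

lemma verts_subset: "K \<subseteq> T \<Longrightarrow> verts K \<subseteq> verts T"
  unfolding verts_def by blast

lemma finite_bd_verts_subcomplex: "K \<subseteq> T \<Longrightarrow> finite (bd_verts K)"
  using bd_verts_subset_verts[of K] verts_subset[of K] finite_verts by (blast intro: finite_subset)

lemma interior_edge_star_subset:
  assumes K: "is_surface K" "K \<subseteq> T" and "v \<notin> bd_verts K" "y \<noteq> v" "\<exists>s\<in>K. {v, y} \<subseteq> s"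
  shows "{t\<in>T. {v, y} \<subseteq> t} \<subseteq> K"
proof -
  have "card {v, y} = 2" using \<open>y \<noteq> v\<close> by simp
  then have eK: "{v, y} \<in> edges K" and eT: "{v, y} \<in> edges T"
    using assms(5) K(2) unfolding edges_def by blast+
  have "{v, y} \<notin> bd_edges K" using \<open>v \<notin> bd_verts K\<close> unfolding bd_verts_def by blast
  then have "tri_count K {v, y} = 2"
    using eK K(1) unfolding is_surface_def bd_edges_def by blast
  moreover have "tri_count T {v, y} = 2" using eT by (rule tri_count_edge)
  moreover have "{t\<in>K. {v, y} \<subseteq> t} \<subseteq> {t\<in>T. {v, y} \<subseteq> t}" using K(2) by blast
  ultimately have "{t\<in>K. {v, y} \<subseteq> t} = {t\<in>T. {v, y} \<subseteq> t}"
    using finite_triangles unfolding tri_count_def by (simp add: card_subset_eq)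
  then show ?thesis by blast
qed

lemma star_subset_if_interior:
  assumes K: "is_surface K" "K \<subseteq> T" and v: "v \<in> verts K" "v \<notin> bd_verts K"
  shows "{t\<in>T. v \<in> t} \<subseteq> K"
proof -
  note edge_star = interior_edge_star_subset[OF K v(2)]
  obtain t0 where t0: "t0 \<in> K" "v \<in> t0" using v(1) unfolding verts_def by blast
  then obtain p q where t0_eq: "t0 = {v, p, q}" "p \<noteq> v"
    using K card_triangle by (metis card_3_split_at subsetD)
  have "v \<in> verts T" using t0 K(2) unfolding verts_def by blast
  then have connected: "graph_connected (link T v)" by (rule link_connected)
  have "t0 - {v} \<in> link T v" unfolding link_def using t0 K(2) by blast
  then have p_link: "p \<in> \<Union>(link T v)" using t0_eq by blast
  show ?thesis
  proof
    fix t assume "t \<in> {t\<in>T. v \<in> t}"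
    then have t: "t \<in> T" "v \<in> t" by simp_all
    then obtain a b where t_eq: "t = {v, a, b}" "a \<noteq> v" by (metis card_3_split_at card_triangle)
    have "t - {v} \<in> link T v" unfolding link_def using t by blast
    then have "a \<in> \<Union>(link T v)" using t_eq by blast
    then have "(\<lambda>x y. {x, y} \<in> link T v)\<^sup>*\<^sup>* p a"
      using connected p_link unfolding graph_connected_def by blast
    then have "a \<noteq> v \<and> (\<exists>s\<in>K. {v, a} \<subseteq> s)"
    proof (induction rule: rtranclp_induct)
      case base
      show ?case using t0 t0_eq by blast
    next
      case (step x y)
      obtain s where s: "{x, y} = s - {v}" "s \<in> T" "v \<in> s"
        using step(2) unfolding link_def by blast
      then have "s \<in> K" using edge_star[of x] step(3) by blast
      then show ?case using s by blast
    qed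
    then show "t \<in> K" using edge_star[of a] t t_eq by blast
  qed
qed

lemma closed_star_subset_if_interior:
  assumes "is_surface K" "K \<subseteq> T" "v \<in> verts K" "v \<notin> bd_verts K"
  shows "insert v (neighbours T v) \<subseteq> verts K"
  using star_subset_if_interior[OF assms] assms(3) unfolding neighbours_def verts_def by blast

lemma bd_verts_nonempty:
  assumes G: "is_surface G" "G \<subseteq> T" and D: "is_surface D" "D \<subseteq> T" and "meet_ok G D"
    and v: "v \<in> verts D" "v \<notin> bd_verts D"
  shows "bd_verts G \<noteq> {}"
proof
  assume no_bd: "bd_verts G = {}"
  \<comment> \<open>Then every vertex of G is interior, so G contains its star in T and thus every vertex of T.\<close>
  have star_G: "{t\<in>T. u \<in> t} \<subseteq> G" if "u \<in> verts G" for u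
    using star_subset_if_interior[OF G that] no_bd by blast
  obtain g where g: "g \<in> G" using G(1) unfolding is_surface_def by blast
  then obtain u where "u \<in> g" using G card_triangle by fastforce
  then have u: "u \<in> verts G" "u \<in> verts T" using g G(2) unfolding verts_def by blast+
  have "\<forall>s\<in>verts G. neighbours T s \<subseteq> verts G"
    using star_G unfolding neighbours_def verts_def by blast
  then have "verts T \<subseteq> verts G" using verts_subset_if_neighbours_closed u by blast
  then have "v \<in> verts G" using v(1) verts_subset[OF D(2)] by blast
  obtain t where t: "t \<in> D" "v \<in> t" using v(1) unfolding verts_def by blast
  then have "t \<in> G" using star_G[OF \<open>v \<in> verts G\<close>] D(2) by blast
  then have "t \<in> faces G" "t \<in> faces D" using t unfolding faces_def by blast+
  then have "card t \<le> 2" using meet_ok_card_le_2 \<open>meet_ok G D\<close> by blast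
  then show False using card_triangle t D(2) by fastforce
qed

lemma common_edge_in_bd_edges:
  assumes "G \<subseteq> T" "X \<subseteq> T" "meet_ok G X" and e: "e \<in> edges G" "e \<in> edges X"
  shows "e \<in> bd_edges G"
proof -
  obtain tx where tx: "tx \<in> X" "e \<subseteq> tx" using e(2) unfolding edges_def by blast
  have "tx \<notin> G"
  proof
    assume "tx \<in> G"
    moreover have "tx \<noteq> {}" using tx e(2) unfolding edges_def by auto
    ultimately have "card tx \<le> 2"
      using meet_ok_card_le_2[OF \<open>meet_ok G X\<close>] tx(1) unfolding faces_def by blast
    then show False using card_triangle tx(1) \<open>X \<subseteq> T\<close> by fastforce
  qed
  \<comment> \<open>Of the two triangles of T on e, one lies in X and hence not in G.\<close>
  have "e \<in> edges T" using e(1) \<open>G \<subseteq> T\<close> unfolding edges_def by blast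
  then have "card {t\<in>T. e \<subseteq> t} = 2" using tri_count_edge unfolding tri_count_def by blast
  moreover have "tx \<in> {t\<in>T. e \<subseteq> t}" using tx \<open>X \<subseteq> T\<close> by blast
  ultimately have "card ({t\<in>T. e \<subseteq> t} - {tx}) = 1" using finite_triangles by simp
  moreover have "card {t\<in>G. e \<subseteq> t} \<le> card ({t\<in>T. e \<subseteq> t} - {tx})"
    using \<open>G \<subseteq> T\<close> \<open>tx \<notin> G\<close> finite_triangles by (intro card_mono) auto
  moreover have "card {t\<in>G. e \<subseteq> t} \<noteq> 0"
    using e(1) finite_subset[OF \<open>G \<subseteq> T\<close> finite_triangles] unfolding edges_def by auto
  ultimately have "tri_count G e = 1" unfolding tri_count_def by linarith
  then show ?thesis using e(1) unfolding bd_edges_def by blast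
qed

lemma bd_edge_in_piece:
  assumes "G \<subseteq> T" "T \<subseteq> G \<union> \<Union>P" and e: "e \<in> bd_edges G"
  obtains X where "X \<in> P" "e \<in> edges X"
proof -
  have eG: "e \<in> edges G" "tri_count G e = 1" using e unfolding bd_edges_def by blast+
  then have "e \<in> edges T" using \<open>G \<subseteq> T\<close> unfolding edges_def by blast
  then have "tri_count T e = 2" by (rule tri_count_edge)
  then have "{t\<in>T. e \<subseteq> t} \<noteq> {t\<in>G. e \<subseteq> t}" using eG(2) unfolding tri_count_def by auto
  then obtain t where "t \<in> T" "e \<subseteq> t" "t \<notin> G" using \<open>G \<subseteq> T\<close> by blast
  then obtain X where "X \<in> P" "t \<in> X" using assms(2) by blast
  then show thesis using that eG(1) \<open>e \<subseteq> t\<close> unfolding edges_def by blast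
qed

lemma common_verts_bd_rel:
  assumes "G \<subseteq> T" "X \<subseteq> T" "meet_ok G X"
    and "x \<in> \<Union>(edges G \<inter> edges X)" "y \<in> \<Union>(edges G \<inter> edges X)"
  shows "(x, y) \<in> bd_rel G"
proof -
  have "(\<lambda>p q. {p, q} \<in> edges G \<inter> edges X)\<^sup>*\<^sup>* x y"
    by (rule meet_ok_common_edges_connected[OF assms(3-5)])
  then show ?thesis
  proof (induction rule: rtranclp_induct)
    case base
    show ?case unfolding bd_rel_def by simp
  next
    case (step p q)
    have "{p, q} \<in> bd_edges G" using step(2) by (intro common_edge_in_bd_edges[OF assms(1-3)]) auto
    then have "(p, q) \<in> {(x, y). {x, y} \<in> bd_edges G}" by simp
    with step(3) show ?case unfolding bd_rel_def by (rule rtrancl_into_rtrancl)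
  qed
qed

lemma card_bd_component_ge_3:
  assumes "G \<subseteq> T" "T \<subseteq> G \<union> \<Union>P" and pieces: "\<forall>X\<in>P. X \<subseteq> T \<and> meet_ok G X"
    and c: "c \<in> bd_components G"
  shows "3 \<le> card c"
proof -
  obtain x where c_eq: "c = bd_rel G `` {x}" and "x \<in> bd_verts G"
    using c unfolding bd_components_eq_quotient by (rule quotientE)
  then obtain e where e: "e \<in> bd_edges G" "x \<in> e" unfolding bd_verts_def by blast
  then obtain X where X: "X \<in> P" "e \<in> edges X" using bd_edge_in_piece assms(1,2) by blast
  \<comment> \<open>The component of x contains the whole circle in which G meets X.\<close>
  define C where "C = \<Union>(edges G \<inter> edges X)"
  have "e \<in> edges G" using e(1) unfolding bd_edges_def by blast
  then have "x \<in> C" using X(2) e(2) unfolding C_def by blast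
  have "C \<subseteq> c"
    using common_verts_bd_rel[OF \<open>G \<subseteq> T\<close>, of X x] pieces X(1) \<open>x \<in> C\<close>
    unfolding c_eq C_def by blast
  moreover have "3 \<le> card C"
    using meet_ok_card_common_verts_ge_3 pieces X \<open>e \<in> edges G\<close> unfolding C_def by blast
  moreover have "finite c"
    using bd_component_subset[OF c] finite_bd_verts_subcomplex[OF \<open>G \<subseteq> T\<close>] by (rule finite_subset)
  ultimately show ?thesis using card_mono by (metis le_trans)
qed

lemma bd_components_meeting_piece_eq:
  assumes "G \<subseteq> T" "X \<subseteq> T" "meet_ok G X"
    and c: "c \<in> bd_components G" "c \<inter> verts X \<noteq> {}"
    and c': "c' \<in> bd_components G" "c' \<inter> verts X \<noteq> {}"
  shows "c = c'"
proof -
  obtain y y' where y: "y \<in> c" "y \<in> verts X" and y': "y' \<in> c'" "y' \<in> verts X"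
    using c(2) c'(2) by blast
  have "y \<in> verts G" using bd_component_subset[OF c(1)] bd_verts_subset_verts[of G] y(1) by blast
  have "y' \<in> verts G" using bd_component_subset[OF c'(1)] bd_verts_subset_verts[of G] y'(1) by blast
  \<comment> \<open>G meets X in one circle, which is connected by boundary edges of G.\<close>
  have "y \<in> \<Union>(edges G \<inter> edges X)" by (rule meet_ok_common_vertex[OF assms(3) \<open>y \<in> verts G\<close> y(2)])
  moreover have "y' \<in> \<Union>(edges G \<inter> edges X)"
    by (rule meet_ok_common_vertex[OF assms(3) \<open>y' \<in> verts G\<close> y'(2)])
  ultimately have "(y, y') \<in> bd_rel G" by (rule common_verts_bd_rel[OF assms(1-3)])
  then have "y' \<in> c"
    by (rule in_quotient_imp_closed[OF equiv_bd_rel bd_component_in_quotient[OF c(1)] y(1)])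
  then show ?thesis
    using quotient_disj[OF equiv_bd_rel bd_component_in_quotient[OF c(1)]
        bd_component_in_quotient[OF c'(1)]] y'(1) by blast
qed

lemma card_verts_ge_12_if_two_triples_outside_max_star:
  assumes v: "v \<in> verts T" and max: "\<forall>w\<in>verts T. valence T w \<le> valence T v"
    and AB: "A \<subseteq> verts T - insert v (neighbours T v)" "B \<subseteq> verts T - insert v (neighbours T v)"
      "A \<inter> B = {}" "3 \<le> card A" "3 \<le> card B"
  shows "12 \<le> card (verts T)"
proof -
  define N where "N = neighbours T v"
  have "finite A" "finite B" using AB(1,2) finite_verts finite_subset by blast+
  have "card (A \<union> B \<union> insert v N) = card A + card B + card N + 1"
    using AB \<open>finite A\<close> \<open>finite B\<close> finite_neighbours unfolding N_def neighbours_def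
    by (subst card_Un_disjoint; auto simp: card_Un_disjoint)
  moreover have "A \<union> B \<union> insert v N \<subseteq> verts T"
    using AB(1,2) v unfolding N_def neighbours_def verts_def by blast
  ultimately have bound: "card A + card B + card N + 1 \<le> card (verts T)"
    using finite_verts by (metis card_mono)
  show ?thesis
  proof (cases "card N \<le> 4")
    case True
    then have "\<forall>u\<in>verts T. card (neighbours T u) \<le> 4"
      using max unfolding N_def valence_eq_card_neighbours by fastforce
    then have "card (verts T) \<le> 6" by (rule card_verts_le_6_if_valence_le_4)
    moreover have "3 \<le> card N" unfolding N_def using v by (rule card_neighbours_ge_3)
    ultimately show ?thesis using bound AB(4,5) by linarith
  next
    case False
    then show ?thesis using bound AB(4,5) by linarith
  qed
qed

lemma card_bd_components_le_2:
  assumes le11: "card (verts T) \<le> 11" and "G \<subseteq> T" "T \<subseteq> G \<union> \<Union>P"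
    and pieces: "\<forall>X\<in>P. X \<subseteq> T \<and> meet_ok G X" and D: "D \<in> P" "is_surface D"
    and v: "v \<in> verts D" "v \<notin> bd_verts D" and max: "\<forall>w\<in>verts T. valence T w \<le> valence T v"
  shows "card (bd_components G) \<le> 2"
proof (rule ccontr)
  assume "\<not> card (bd_components G) \<le> 2"
  define meeting where "meeting = {c \<in> bd_components G. c \<inter> verts D \<noteq> {}}"
  define avoiding where "avoiding = {c \<in> bd_components G. c \<inter> verts D = {}}"
  have split: "bd_components G = meeting \<union> avoiding" unfolding meeting_def avoiding_def by blast
  have fin: "finite (bd_components G)" using finite_bd_verts_subcomplex[OF \<open>G \<subseteq> T\<close>]
    by (rule finite_bd_components)
  have "D \<subseteq> T" "meet_ok G D" using pieces D(1) by blast+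
  then have "\<forall>c\<in>meeting. \<forall>c'\<in>meeting. c = c'"
    using bd_components_meeting_piece_eq[OF \<open>G \<subseteq> T\<close>] unfolding meeting_def by blast
  moreover have "finite meeting" using fin unfolding meeting_def by simp
  ultimately have "card meeting \<le> 1" using card_le_Suc0_iff_eq by (metis One_nat_def)
  moreover have "card (bd_components G) \<le> card meeting + card avoiding"
    using card_Un_le split by metis
  ultimately have "\<not> card avoiding \<le> Suc 0" using \<open>\<not> card (bd_components G) \<le> 2\<close> by linarith
  then obtain A B where A: "A \<in> avoiding" and B: "B \<in> avoiding" and "A \<noteq> B"
    using fin card_le_Suc0_iff_eq[of avoiding] unfolding avoiding_def by auto
  then have "A \<inter> B = {}"
    using quotient_disj[OF equiv_bd_rel] bd_component_in_quotient unfolding avoiding_def by blast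
  \<comment> \<open>v and its neighbours are vertices of the disc D, which A and B avoid.\<close>
  moreover have "A \<subseteq> verts T - insert v (neighbours T v)" "B \<subseteq> verts T - insert v (neighbours T v)"
    using A B closed_star_subset_if_interior[OF D(2) \<open>D \<subseteq> T\<close> v] bd_component_subset
      bd_verts_subset_verts[of G] verts_subset[OF \<open>G \<subseteq> T\<close>]
    unfolding avoiding_def by blast+
  moreover have "3 \<le> card A" "3 \<le> card B"
    using A B card_bd_component_ge_3[OF \<open>G \<subseteq> T\<close> \<open>T \<subseteq> G \<union> \<Union>P\<close> pieces]
    unfolding avoiding_def by blast+
  moreover have "v \<in> verts T" using v(1) verts_subset[OF \<open>D \<subseteq> T\<close>] by blast
  ultimately have "12 \<le> card (verts T)"
    using card_verts_ge_12_if_two_triples_outside_max_star max by blast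
  then show False using le11 by simp
qed

end

theorem mainTheorem8:
  fixes T G D :: "'a set set" and Ds :: "'a set set list"
  assumes "closed_surface T"
    and "card (verts T) \<le> 11"
    and "decomposition T G D Ds"
  shows "card (bd_components G) = 1 \<or> card (bd_components G) = 2"
proof -
  interpret closed_triangulation T by unfold_locales (rule assms(1))
  obtain v where G: "is_surface G" "G \<subseteq> T" and D: "is_surface D" "D \<subseteq> T"
    and v: "v \<in> verts D" "v \<notin> bd_verts D" and max: "\<forall>w\<in>verts T. valence T w \<le> valence T v"
    and cover: "T \<subseteq> G \<union> \<Union>(insert D (set Ds))"
    and pieces: "\<forall>X\<in>insert D (set Ds). X \<subseteq> T \<and> meet_ok G X"
    using assms(3) unfolding decomposition_def is_disc_def by blast
  have "bd_components G \<noteq> {}"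
    using bd_verts_nonempty[OF G D _ v] pieces unfolding bd_components_eq_quotient by simp
  moreover have "finite (bd_components G)"
    using finite_bd_components finite_bd_verts_subcomplex[OF G(2)] by blast
  moreover have "card (bd_components G) \<le> 2"
    using card_bd_components_le_2[OF assms(2) G(2) cover pieces _ D(1) v max] by blast
  ultimately show ?thesis by (metis card_0_eq le_Suc_eq numeral_2_eq_2 One_nat_def le_zero_eq)
qed

end
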